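(* Let $d\ge 1$, $m\ge 2$, and let $\boldsymbol{w}_1,\dots,\boldsymbol{w}_m\in\mathbb{R}^d$ be random vectors (possibly dependent on one another) such that each $\boldsymbol{w}_i$ is marginally distributed as $\mathcal{N}(0,\mathbf{I}_d)$ and, for every $i\neq j$, the distribution of $\boldsymbol{w}_i+\boldsymbol{w}_j$ is rotationally invariant. For $\boldsymbol{x},\boldsymbol{y}\in\mathbb{R}^d$ let $\widehat{K}(\boldsymbol{x},\boldsymbol{y})=\phi(\boldsymbol{x})^\top\phi(\boldsymbol{y})$ be the positive random feature estimator of $K(\boldsymbol{x},\boldsymbol{y})=\exp(-\|\boldsymbol{x}-\boldsymbol{y}\|_2^2/2)$, and write $x=\|\boldsymbol{x}\|_2$, $y=\|\boldsymbol{y}\|_2$, $v=\|\boldsymbol{x}+\boldsymbol{y}\|_2$. Then $$\mathrm{MSE}(\widehat{K})=\mathbb{E}\big[(\widehat{K}(\boldsymbol{x},\boldsymbol{y})-K(\boldsymbol{x},\boldsymbol{y}))^2\big]=\frac{e^{-2x^2-2y^2}}{m}\Big((e^{2v^2}-e^{v^2})+(m-1)\big(\rho(\boldsymbol{x},\boldsymbol{y})-e^{v^2}\big)\Big).$$ In particular, the MSE is an increasing function of the RF-conformity $\rho(\boldsymbol{x},\boldsymbol{y})$.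
   Context: Positive random features (PRFs): given random vectors $\boldsymbol{w}_1,\dots,\boldsymbol{w}_m\in\mathbb{R}^d$, define for $\boldsymbol{z}\in\mathbb{R}^d$ the feature map $\phi(\boldsymbol{z})=\frac{1}{\sqrt m}\exp(-\|\boldsymbol{z}\|_2^2)\big(\exp(\boldsymbol{w}_1^\top\boldsymbol{z}),\dots,\exp(\boldsymbol{w}_m^\top\boldsymbol{z})\big)^\top\in\mathbb{R}^m$. The RF-conformity is $$\rho(\boldsymbol{x},\boldsymbol{y})=\frac{\Gamma(\frac d2)}{m(m-1)}\sum_{i=1}^m\sum_{j\neq i}\mathbb{E}\left(\sum_{k=0}^\infty\frac{v^{2k}w_{ij}^{2k}}{2^{2k}k!\,\Gamma(k+\frac d2)}\right),\qquad w_{ij}=\|\boldsymbol{w}_i+\boldsymbol{w}_j\|_2,\ v=\|\boldsymbol{x}+\boldsymbol{y}\|_2,$$ where $\Gamma$ is the Gamma function. *)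

theory Defs
  imports "HOL-Probability.Probability"
begin

definition std_gauss_density :: "real^'d \<Rightarrow> real" where
  "std_gauss_density z = (2 * pi) powr (- real CARD('d) / 2) * exp (- (norm z)\<^sup>2 / 2)"

definition rot_invariant_distr :: "'a measure \<Rightarrow> ('a \<Rightarrow> real^'d) \<Rightarrow> bool" where
  "rot_invariant_distr M X \<longleftrightarrow>
     (\<forall>Q::real^'d^'d. orthogonal_matrix Q \<longrightarrow>
        distr M borel (\<lambda>\<omega>. Q *v X \<omega>) = distr M borel X)"

definition prf_feature :: "nat \<Rightarrow> (nat \<Rightarrow> real^'d) \<Rightarrow> real^'d \<Rightarrow> nat \<Rightarrow> real" where
  "prf_feature m w z k = (1 / sqrt (real m)) * exp (- (norm z)\<^sup>2) * exp (w k \<bullet> z)"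

definition prf_estimator :: "nat \<Rightarrow> (nat \<Rightarrow> real^'d) \<Rightarrow> real^'d \<Rightarrow> real^'d \<Rightarrow> real" where
  "prf_estimator m w x y = (\<Sum>k=1..m. prf_feature m w x k * prf_feature m w y k)"

definition gauss_kernel :: "real^'d \<Rightarrow> real^'d \<Rightarrow> real" where
  "gauss_kernel x y = exp (- (norm (x - y))\<^sup>2 / 2)"

definition rf_conformity ::
  "'a measure \<Rightarrow> nat \<Rightarrow> (nat \<Rightarrow> 'a \<Rightarrow> real^'d) \<Rightarrow> real^'d \<Rightarrow> real^'d \<Rightarrow> real" where
  "rf_conformity M m W x y =
     Gamma (real CARD('d) / 2) / (real m * (real m - 1)) *
     (\<Sum>i=1..m. \<Sum>j\<in>{1..m} - {i}.
        integral\<^sup>L M (\<lambda>\<omega>. \<Sum>k. (norm (x + y))^(2*k) * (norm (W i \<omega> + W j \<omega>))^(2*k)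
                      / (2^(2*k) * fact k * Gamma (real k + real CARD('d) / 2))))"

end

theory Submission
  imports Defs
begin

text \<open>
  Write e_k = exp (w_k . (x + y)) and C = exp (- |x|^2 - |y|^2). The estimator is
  C/m * (e_1 + ... + e_m) and K(x, y) = C * exp (v^2/2), so after expanding the square the MSE
  only involves E e_k = exp (v^2/2) and E e_k^2 = exp (2 v^2) (Laplace transform of a Gaussian)
  and the cross moments E e_i e_j = E exp (U . (x + y)) with U = w_i + w_j.

  For rotation-invariant U and a unit vector e, E exp (U . z) depends only on |z| and equals
  sum_k |z|^(2k) / (2k)! * E (U . e)^(2k). Integrating exp (s U . g) against an independent
  standard Gaussian g in both orders gives
    sum_k (s^2/2)^k / k! * E |U|^(2k) = sum_k s^(2k) / (2k)! * E (U . e)^(2k) * E |g|^(2k),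
  and E |g|^(2k) = 2^k (d/2)_k. Comparing coefficients of these power series in s^2 expresses
  the directional moments through the radial ones; substituting back turns E exp (U . z) into
  Gamma(d/2) times the expectation of the series that defines the RF-conformity.
\<close>

subsection \<open>Series\<close>

lemma powser_sums_zero_imp_coeff_zero:
  fixes c :: "nat \<Rightarrow> real"
  assumes \<delta>: "\<delta> > 0" and zero: "\<And>t. 0 < t \<Longrightarrow> t < \<delta> \<Longrightarrow> (\<lambda>k. c k * t^k) sums 0"
  shows "c n = 0"
proof (induction n rule: less_induct)
  case (less n)
  have shifted: "(\<lambda>k. c (k + n) * t^k) sums 0" if t: "0 < t" "t < \<delta>" for t
  proof -
    have "(\<lambda>k. c (k + n) * t^(k + n)) sums 0"
      using sums_iff_shift[of "\<lambda>k. c k * t^k" n 0] zero[OF t] less.IH by simp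
    then have "(\<lambda>k. c (k + n) * t^(k + n) / t^n) sums (0 / t^n)"
      by (rule sums_divide)
    then show ?thesis using t by (simp add: power_add)
  qed
  define h where "h t = (\<Sum>k. c (k + n) * t^k)" for t :: real
  have "summable (\<lambda>k. c (k + n) * (\<delta>/2)^k)"
    using shifted[of "\<delta>/2"] \<delta> sums_summable by auto
  then have "isCont h 0"
    unfolding h_def by (rule isCont_powser) (use \<delta> in simp)
  then have "(h \<longlongrightarrow> h 0) (at_right 0)"
    by (simp add: isCont_def filterlim_at_split)
  moreover have "eventually (\<lambda>t. h t = 0) (at_right (0::real))"
    unfolding eventually_at_right_field
    by (rule exI[of _ \<delta>]) (use \<delta> shifted in \<open>auto simp: h_def sums_iff\<close>)
  then have "(h \<longlongrightarrow> 0) (at_right 0)"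
    by (rule tendsto_eventually)
  ultimately have "h 0 = 0"
    using tendsto_unique[OF trivial_limit_at_right_real] by blast
  then show ?case
    using powser_zero[of "\<lambda>k. c (k + n)"] by (simp add: h_def)
qed

lemma powser_sums_unique_coeffs:
  fixes a b :: "nat \<Rightarrow> real"
  assumes "\<delta> > 0"
    and "\<And>t. 0 < t \<Longrightarrow> t < \<delta> \<Longrightarrow> (\<lambda>k. a k * t^k) sums S t"
    and "\<And>t. 0 < t \<Longrightarrow> t < \<delta> \<Longrightarrow> (\<lambda>k. b k * t^k) sums S t"
  shows "a n = b n"
proof -
  have "a n - b n = 0"
  proof (rule powser_sums_zero_imp_coeff_zero[OF assms(1)])
    fix t :: real assume "0 < t" "t < \<delta>"
    from sums_diff[OF assms(2,3)[OF this]]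
    show "(\<lambda>k. (a k - b k) * t^k) sums 0" by (simp add: algebra_simps)
  qed
  then show ?thesis by simp
qed

lemma ennreal_powser_coeffs_unique:
  fixes a b :: "nat \<Rightarrow> real"
  assumes "\<delta> > 0" "\<And>k. 0 \<le> a k" "\<And>k. 0 \<le> b k"
    and eq: "\<And>t. 0 < t \<Longrightarrow> t < \<delta> \<Longrightarrow> (\<Sum>k. ennreal (a k * t^k)) = (\<Sum>k. ennreal (b k * t^k))"
    and fin: "\<And>t. 0 < t \<Longrightarrow> t < \<delta> \<Longrightarrow> (\<Sum>k. ennreal (a k * t^k)) < \<top>"
  shows "a n = b n"
proof (rule powser_sums_unique_coeffs[where S = "\<lambda>t. enn2real (\<Sum>k. ennreal (a k * t^k))", OF assms(1)])
  fix t :: real assume t: "0 < t" "t < \<delta>"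
  obtain S where S: "(\<Sum>k. ennreal (a k * t^k)) = ennreal S" "0 \<le> S"
    using fin[OF t] by (cases "\<Sum>k. ennreal (a k * t^k)" rule: ennreal_cases) auto
  have "(\<lambda>k. ennreal (a k * t^k)) sums ennreal S" "(\<lambda>k. ennreal (b k * t^k)) sums ennreal S"
    using summable_sums[OF summableI, of "\<lambda>k. ennreal (a k * t^k)"]
      summable_sums[OF summableI, of "\<lambda>k. ennreal (b k * t^k)"] eq[OF t] S(1)
    by simp_all
  moreover have "0 \<le> a k * t^k" "0 \<le> b k * t^k" for k
    using assms(2,3) t by simp_all
  ultimately show "(\<lambda>k. a k * t^k) sums enn2real (\<Sum>k. ennreal (a k * t^k))"
    "(\<lambda>k. b k * t^k) sums enn2real (\<Sum>k. ennreal (a k * t^k))"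
    using S by simp_all
qed

lemma pochhammer_powser_sums:
  fixes a t :: real
  assumes "\<bar>t\<bar> < 1"
  shows "(\<lambda>k. pochhammer a k / fact k * t^k) sums ((1 - t) powr (- a))"
proof -
  have "(\<lambda>k. ((- a) gchoose k) * (- t)^k) sums (1 + - t) powr (- a)"
    by (rule gen_binomial_real) (use assms in simp)
  moreover have "((- a) gchoose k) * (- t)^k = pochhammer a k / fact k * t^k" for k
  proof -
    have "(-1::real)^k * (-1)^k = 1"
      by (simp flip: power_mult_distrib)
    then show ?thesis
      by (simp add: gbinomial_pochhammer power_minus[of t k] field_simps)
  qed
  ultimately show ?thesis
    by simp
qed

lemma ennreal_exp_mult_series:
  fixes c X :: real
  assumes "0 \<le> c" "0 \<le> X"
  shows "ennreal (exp (c * X)) = (\<Sum>k. ennreal (c^k / fact k) * ennreal (X^k))"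
proof -
  have sums: "(\<lambda>k. c^k / fact k * X^k) sums exp (c * X)"
    using exp_converges[of "c * X"] by (simp add: power_mult_distrib divide_inverse mult_ac)
  have terms: "ennreal (c^k / fact k) * ennreal (X^k) = ennreal (c^k / fact k * X^k)" for k
    by (rule ennreal_mult[symmetric]) (use assms in simp_all)
  show ?thesis
    unfolding terms by (rule suminf_ennreal_eq[OF _ sums, symmetric]) (use assms in simp)
qed

lemma ennreal_cosh_mult_series:
  fixes r a :: real
  shows "ennreal (cosh (r * a)) = (\<Sum>k. ennreal (r^(2*k) / fact (2*k)) * ennreal (a^(2*k)))"
proof -
  have "(\<lambda>k. \<Sum>n\<in>{k * 2..<k * 2 + 2}. if even n then (r * a) ^ n /\<^sub>R fact n else 0) sums cosh (r * a)"
    by (rule sums_group[OF cosh_converges]) simp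
  moreover have "{k * 2..<k * 2 + 2} = {2*k, Suc (2*k)}" for k by auto
  ultimately have sums: "(\<lambda>k. r^(2*k) / fact (2*k) * a^(2*k)) sums cosh (r * a)"
    by (simp add: power_mult_distrib divide_inverse mult_ac)
  have terms: "ennreal (r^(2*k) / fact (2*k)) * ennreal (a^(2*k)) = ennreal (r^(2*k) / fact (2*k) * a^(2*k))" for k
    by (rule ennreal_mult[symmetric]) (simp_all add: zero_le_even_power)
  show ?thesis
    unfolding terms by (rule suminf_ennreal_eq[OF _ sums, symmetric]) (simp add: zero_le_even_power)
qed

lemma pochhammer_ge_power:
  fixes a :: real
  assumes "0 < a"
  shows "a^k \<le> pochhammer a k"
proof (induction k)
  case (Suc k)
  have "a^Suc k = a^k * a" by simp
  also have "\<dots> \<le> pochhammer a k * (a + of_nat k)"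
    by (rule mult_mono) (use Suc assms in \<open>auto intro: pochhammer_nonneg\<close>)
  also have "\<dots> = pochhammer a (Suc k)" by (simp add: pochhammer_Suc)
  finally show ?case .
qed simp

lemma Gamma_add_of_nat_eq_pochhammer:
  fixes a :: real
  assumes "0 < a"
  shows "Gamma (real k + a) = pochhammer a k * Gamma a"
proof -
  have "a \<notin> \<int>\<^sub>\<le>\<^sub>0" using assms by auto
  then have "pochhammer a k = Gamma (a + of_nat k) / Gamma a" by (rule pochhammer_Gamma)
  then show ?thesis using Gamma_real_pos[OF assms] by (simp add: add.commute)
qed

lemma nn_integral_exp_mult_series:
  fixes f :: "'a \<Rightarrow> ennreal" and h :: "'a \<Rightarrow> real"
  assumes [measurable]: "f \<in> borel_measurable M" "h \<in> borel_measurable M"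
    and "0 \<le> c" "\<And>x. 0 \<le> h x"
  shows "(\<integral>\<^sup>+x. f x * ennreal (exp (c * h x)) \<partial>M)
    = (\<Sum>k. ennreal (c^k / fact k) * (\<integral>\<^sup>+x. f x * ennreal (h x ^ k) \<partial>M))"
proof -
  have "(\<integral>\<^sup>+x. f x * ennreal (exp (c * h x)) \<partial>M)
      = (\<integral>\<^sup>+x. (\<Sum>k. ennreal (c^k / fact k) * (f x * ennreal (h x ^ k))) \<partial>M)"
    using assms(3,4) by (simp add: ennreal_exp_mult_series mult.left_commute)
  also have "\<dots> = (\<Sum>k. ennreal (c^k / fact k) * (\<integral>\<^sup>+x. f x * ennreal (h x ^ k) \<partial>M))"
    by (subst nn_integral_suminf) (auto intro!: suminf_cong nn_integral_cmult)
  finally show ?thesis .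
qed

subsection \<open>Moments of the standard Gaussian\<close>

lemma std_gauss_density_nonneg [simp]: "0 \<le> std_gauss_density z"
  by (simp add: std_gauss_density_def)

lemma std_gauss_density_measurable [measurable]: "std_gauss_density \<in> borel_measurable borel"
  unfolding std_gauss_density_def by measurable

lemma nn_integral_lborel_shift:
  fixes f :: "'b::euclidean_space \<Rightarrow> ennreal"
  assumes [measurable]: "f \<in> borel_measurable borel"
  shows "(\<integral>\<^sup>+x. f (t + x) \<partial>lborel) = (\<integral>\<^sup>+x. f x \<partial>lborel)"
proof -
  have "(\<integral>\<^sup>+x. f x \<partial>lborel) = (\<integral>\<^sup>+x. f x \<partial>(distr lborel borel ((+) t)))"
    by (simp add: lborel_distr_plus)
  also have "\<dots> = (\<integral>\<^sup>+x. f (t + x) \<partial>lborel)"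
    by (subst nn_integral_distr) auto
  finally show ?thesis ..
qed

lemma nn_integral_lborel_scale:
  fixes f :: "'b::euclidean_space \<Rightarrow> ennreal"
  assumes [measurable]: "f \<in> borel_measurable borel" and "c > 0"
  shows "(\<integral>\<^sup>+x. f x \<partial>lborel) = ennreal (c ^ DIM('b)) * (\<integral>\<^sup>+x. f (c *\<^sub>R x) \<partial>lborel)"
proof -
  have "(\<integral>\<^sup>+x. f x \<partial>lborel) =
     (\<integral>\<^sup>+x. f x \<partial>(density (distr lborel borel (\<lambda>x. 0 + c *\<^sub>R x)) (\<lambda>_. \<bar>c\<bar>^DIM('b))))"
    using lborel_affine[of c "0::'b"] assms(2) by simp
  also have "\<dots> = ennreal (c ^ DIM('b)) * (\<integral>\<^sup>+x. f (c *\<^sub>R x) \<partial>lborel)"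
    using assms(2) by (simp add: nn_integral_density nn_integral_distr nn_integral_cmult)
  finally show ?thesis .
qed

text \<open>The normalisation of the Gaussian density is a hypothesis of the lemmas below; in the
  theorem it follows from the Gaussian marginals on a probability space.\<close>

lemma nn_integral_std_gauss_exp_inner:
  fixes z :: "real^'d"
  assumes norm1: "(\<integral>\<^sup>+w. ennreal (std_gauss_density (w::real^'d)) \<partial>lborel) = 1"
  shows "(\<integral>\<^sup>+w. ennreal (std_gauss_density w * exp (w \<bullet> z)) \<partial>lborel) = ennreal (exp ((norm z)\<^sup>2 / 2))"
proof -
  have shift: "std_gauss_density w * exp (w \<bullet> z) = exp ((norm z)\<^sup>2 / 2) * std_gauss_density (- z + w)" for w
  proof -
    have "(norm (-z + w))\<^sup>2 = (norm w)\<^sup>2 - 2 * (w \<bullet> z) + (norm z)\<^sup>2"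
      by (simp add: power2_norm_eq_inner inner_add inner_commute algebra_simps)
    then show ?thesis
      by (simp add: std_gauss_density_def exp_add[symmetric] field_simps)
  qed
  have "(\<integral>\<^sup>+w. ennreal (std_gauss_density w * exp (w \<bullet> z)) \<partial>lborel)
      = ennreal (exp ((norm z)\<^sup>2 / 2)) * (\<integral>\<^sup>+w. ennreal (std_gauss_density (- z + w)) \<partial>lborel)"
    unfolding shift by (simp add: ennreal_mult nn_integral_cmult)
  also have "(\<integral>\<^sup>+w. ennreal (std_gauss_density (- z + w)) \<partial>lborel) = 1"
    using nn_integral_lborel_shift[of "\<lambda>w. ennreal (std_gauss_density w)" "-z"] norm1 by simp
  finally show ?thesis by simp
qed

lemma nn_integral_std_gauss_exp_norm_sq:
  assumes norm1: "(\<integral>\<^sup>+w. ennreal (std_gauss_density (w::real^'d)) \<partial>lborel) = 1"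
    and t: "0 \<le> t" "t < 1"
  shows "(\<integral>\<^sup>+w. ennreal (std_gauss_density (w::real^'d) * exp (t * (norm w)\<^sup>2 / 2)) \<partial>lborel)
         = ennreal ((1 - t) powr (- real CARD('d) / 2))"
proof -
  define a where "a = sqrt (1 - t)"
  have a: "a > 0" "a\<^sup>2 = 1 - t" using t by (simp_all add: a_def)
  define A where "A = (1 - t) powr (real CARD('d) / 2)"
  have A: "A > 0" "a ^ CARD('d) = A"
    using t by (simp_all add: A_def a_def powr_half_sqrt[symmetric] powr_realpow[symmetric] powr_powr)
  have scale: "std_gauss_density w * exp (t * (norm w)\<^sup>2 / 2) = std_gauss_density (a *\<^sub>R w)" for w :: "real^'d"
    by (simp add: std_gauss_density_def exp_add[symmetric] power_mult_distrib a(2) algebra_simps)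
  define I where "I = (\<integral>\<^sup>+w. ennreal (std_gauss_density (a *\<^sub>R (w::real^'d))) \<partial>lborel)"
  have "1 = ennreal A * I"
    using nn_integral_lborel_scale[of "\<lambda>w. ennreal (std_gauss_density (w::real^'d))" a] a norm1 A
    by (simp add: I_def)
  then have "ennreal (inverse A) = ennreal (inverse A) * ennreal A * I"
    by (simp add: mult.assoc)
  also have "\<dots> = I"
    using A by (simp flip: ennreal_mult)
  finally have "I = ennreal (inverse A)" ..
  also have "inverse A = (1 - t) powr (- real CARD('d) / 2)"
    using t by (simp add: A_def powr_minus)
  finally show ?thesis unfolding scale I_def .
qed

lemma nn_integral_std_gauss_norm_pow_series:
  assumes norm1: "(\<integral>\<^sup>+w. ennreal (std_gauss_density (w::real^'d)) \<partial>lborel) = 1"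
    and t: "0 \<le> t" "t < 1"
  shows "(\<Sum>k. ennreal ((t/2)^k / fact k)
      * (\<integral>\<^sup>+w. ennreal (std_gauss_density (w::real^'d) * (norm w)^(2*k)) \<partial>lborel))
    = ennreal ((1 - t) powr (- real CARD('d) / 2))"
proof -
  have "ennreal (std_gauss_density w) * ennreal (((norm w)\<^sup>2)^k)
      = ennreal (std_gauss_density w * (norm w)^(2*k))" for w :: "real^'d" and k
    by (simp add: ennreal_mult power_mult)
  then have "(\<Sum>k. ennreal ((t/2)^k / fact k)
      * (\<integral>\<^sup>+w. ennreal (std_gauss_density (w::real^'d) * (norm w)^(2*k)) \<partial>lborel))
      = (\<integral>\<^sup>+w. ennreal (std_gauss_density (w::real^'d)) * ennreal (exp (t/2 * (norm w)\<^sup>2)) \<partial>lborel)"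
    using t by (subst nn_integral_exp_mult_series) auto
  also have "\<dots> = (\<integral>\<^sup>+w. ennreal (std_gauss_density (w::real^'d) * exp (t * (norm w)\<^sup>2 / 2)) \<partial>lborel)"
    by (simp add: ennreal_mult)
  finally show ?thesis
    using nn_integral_std_gauss_exp_norm_sq[OF norm1 t] by simp
qed

lemma nn_integral_std_gauss_norm_pow:
  assumes norm1: "(\<integral>\<^sup>+w. ennreal (std_gauss_density (w::real^'d)) \<partial>lborel) = 1"
  shows "(\<integral>\<^sup>+w. ennreal (std_gauss_density (w::real^'d) * (norm w)^(2*k)) \<partial>lborel)
         = ennreal (2^k * pochhammer (real CARD('d) / 2) k)"
proof -
  define \<mu> where "\<mu> k = (\<integral>\<^sup>+w. ennreal (std_gauss_density (w::real^'d) * (norm w)^(2*k)) \<partial>lborel)" for k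
  define p where "p k = pochhammer (real CARD('d) / 2) k" for k
  note series = nn_integral_std_gauss_norm_pow_series[OF norm1, folded \<mu>_def]
  have fin: "\<mu> k < \<top>" for k
  proof -
    have "(\<Sum>k. ennreal ((1/2/2)^k / fact k) * \<mu> k) < \<top>"
      using series[of "1/2"] by simp
    then have "ennreal ((1/2/2)^k / fact k) * \<mu> k < \<top>"
      by (rule ennreal_suminf_lessD)
    then show ?thesis
      by (auto simp: ennreal_mult_less_top)
  qed
  define r where "r k = enn2real (\<mu> k)" for k
  have \<mu>: "\<mu> k = ennreal (r k)" and r: "0 \<le> r k" for k
    using fin[of k] by (simp_all add: r_def)
  have "r k / (2^k * fact k) = p k / fact k"
  proof (rule ennreal_powser_coeffs_unique[where a = "\<lambda>k. r k / (2^k * fact k)" and b = "\<lambda>k. p k / fact k",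
        of 1])
    fix t :: real assume t: "0 < t" "t < 1"
    have "ennreal (r k / (2^k * fact k) * t^k) = ennreal ((t/2)^k / fact k) * \<mu> k" for k
      unfolding \<mu> using t r by (simp add: ennreal_mult[symmetric] power_divide)
    then have "(\<Sum>k. ennreal (r k / (2^k * fact k) * t^k)) = ennreal ((1 - t) powr (- real CARD('d) / 2))"
      using series[of t] t by simp
    also have "\<dots> = (\<Sum>k. ennreal (p k / fact k * t^k))"
    proof (rule suminf_ennreal_eq[symmetric])
      show "(\<lambda>k. p k / fact k * t^k) sums ((1 - t) powr (- real CARD('d) / 2))"
        unfolding p_def minus_divide_left[symmetric] by (rule pochhammer_powser_sums) (use t in simp)
    qed (use t in \<open>simp add: p_def pochhammer_nonneg\<close>)
    finally show "(\<Sum>k. ennreal (r k / (2^k * fact k) * t^k)) = (\<Sum>k. ennreal (p k / fact k * t^k))" .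
    show "(\<Sum>k. ennreal (r k / (2^k * fact k) * t^k)) < \<top>"
      using \<open>(\<Sum>k. ennreal (r k / (2^k * fact k) * t^k)) = ennreal ((1 - t) powr _)\<close> by simp
  qed (use r in \<open>simp_all add: p_def pochhammer_nonneg\<close>)
  then have "r k = 2^k * p k"
    by (simp add: field_simps)
  then show ?thesis
    using \<mu>[of k] by (simp add: \<mu>_def p_def)
qed

subsection \<open>Rotation-invariant random vectors\<close>

definition proj_moment :: "'a measure \<Rightarrow> ('a \<Rightarrow> real^'d) \<Rightarrow> real^'d \<Rightarrow> nat \<Rightarrow> ennreal" where
  "proj_moment M U e k = (\<integral>\<^sup>+\<omega>. ennreal ((U \<omega> \<bullet> e)^(2*k)) \<partial>M)"

definition norm_moment :: "'a measure \<Rightarrow> ('a \<Rightarrow> real^'d) \<Rightarrow> nat \<Rightarrow> ennreal" where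
  "norm_moment M U k = (\<integral>\<^sup>+\<omega>. ennreal ((norm (U \<omega>))^(2*k)) \<partial>M)"

lemma matrix_vector_mult_measurable [measurable]:
  "(\<lambda>x. (Q::real^'n^'m) *v x) \<in> borel_measurable borel"
  by (intro borel_measurable_continuous_onI continuous_intros)

lemma rot_invariant_nn_integral:
  fixes U :: "'a \<Rightarrow> real^'d" and f :: "real^'d \<Rightarrow> ennreal"
  assumes [measurable]: "U \<in> borel_measurable M" "f \<in> borel_measurable borel"
    and "rot_invariant_distr M U" "orthogonal_matrix Q"
  shows "(\<integral>\<^sup>+\<omega>. f (Q *v U \<omega>) \<partial>M) = (\<integral>\<^sup>+\<omega>. f (U \<omega>) \<partial>M)"
proof -
  have "distr M borel (\<lambda>\<omega>. Q *v U \<omega>) = distr M borel U"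
    using assms(3,4) unfolding rot_invariant_distr_def by blast
  then have "(\<integral>\<^sup>+x. f x \<partial>distr M borel (\<lambda>\<omega>. Q *v U \<omega>)) = (\<integral>\<^sup>+x. f x \<partial>distr M borel U)"
    by simp
  then show ?thesis
    by (simp add: nn_integral_distr)
qed

lemma rot_invariant_exp_inner_radial:
  fixes U :: "'a \<Rightarrow> real^'d"
  assumes [measurable]: "U \<in> borel_measurable M"
    and rot: "rot_invariant_distr M U" and e: "norm e = 1"
  shows "(\<integral>\<^sup>+\<omega>. ennreal (exp (U \<omega> \<bullet> y)) \<partial>M) = (\<integral>\<^sup>+\<omega>. ennreal (exp (norm y * (U \<omega> \<bullet> e))) \<partial>M)"
proof -
  obtain f where f: "orthogonal_transformation f" "f (norm y *\<^sub>R e) = y"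
    using orthogonal_transformation_exists[of "norm y *\<^sub>R e" y] e by auto
  define Q where "Q = matrix f"
  have "linear f" "orthogonal_matrix Q"
    using f(1) orthogonal_transformation_matrix Q_def by blast+
  then have Q: "orthogonal_matrix Q" "Q *v (norm y *\<^sub>R e) = y"
    using f(2) matrix_works[of f] by (simp_all add: Q_def linear_def)
  have "U \<omega> \<bullet> y = norm y * ((transpose Q *v U \<omega>) \<bullet> e)" for \<omega>
    using Q(2) dot_lmul_matrix[of "U \<omega>" Q "norm y *\<^sub>R e"] vector_transpose_matrix[of "U \<omega>" "transpose Q"]
    by simp
  then have "(\<integral>\<^sup>+\<omega>. ennreal (exp (U \<omega> \<bullet> y)) \<partial>M)
      = (\<integral>\<^sup>+\<omega>. ennreal (exp (norm y * ((transpose Q *v U \<omega>) \<bullet> e))) \<partial>M)"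
    by simp
  also have "\<dots> = (\<integral>\<^sup>+\<omega>. ennreal (exp (norm y * (U \<omega> \<bullet> e))) \<partial>M)"
    using Q(1) by (intro rot_invariant_nn_integral[OF _ _ rot]) (auto simp: orthogonal_matrix_transpose)
  finally show ?thesis .
qed

lemma rot_invariant_exp_inner_series:
  fixes U :: "'a \<Rightarrow> real^'d"
  assumes [measurable]: "U \<in> borel_measurable M"
    and rot: "rot_invariant_distr M U" and e: "norm e = 1"
  shows "(\<integral>\<^sup>+\<omega>. ennreal (exp (U \<omega> \<bullet> z)) \<partial>M)
    = (\<Sum>k. ennreal ((norm z)^(2*k) / fact (2*k)) * proj_moment M U e k)"
proof -
  define r where "r = norm z"
  define A where "A s = (\<integral>\<^sup>+\<omega>. ennreal (exp (s * (U \<omega> \<bullet> e))) \<partial>M)" for s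
  have radial: "(\<integral>\<^sup>+\<omega>. ennreal (exp (U \<omega> \<bullet> y)) \<partial>M) = A (norm y)" for y
    unfolding A_def by (rule rot_invariant_exp_inner_radial[OF _ rot e]) simp
  have "A (- r) = A r"
    using radial[of "(- r) *\<^sub>R e"] e by (simp add: A_def r_def)
  \<comment> \<open>by symmetry, the Laplace transform equals the integral of cosh, whose series has only even terms\<close>
  have "ennreal (cosh (r * (U \<omega> \<bullet> e)))
      = ennreal (1/2) * ennreal (exp (r * (U \<omega> \<bullet> e))) + ennreal (1/2) * ennreal (exp ((- r) * (U \<omega> \<bullet> e)))" for \<omega>
  proof -
    have "cosh (r * (U \<omega> \<bullet> e)) = (1/2) * exp (r * (U \<omega> \<bullet> e)) + (1/2) * exp ((- r) * (U \<omega> \<bullet> e))"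
      by (simp add: cosh_def)
    then have "ennreal (cosh (r * (U \<omega> \<bullet> e)))
        = ennreal ((1/2) * exp (r * (U \<omega> \<bullet> e))) + ennreal ((1/2) * exp ((- r) * (U \<omega> \<bullet> e)))"
      by (simp only: ennreal_plus[symmetric] mult_nonneg_nonneg exp_ge_zero)
    then show ?thesis
      by (simp only: ennreal_mult'[of "1/2"])
  qed
  then have "(\<integral>\<^sup>+\<omega>. ennreal (cosh (r * (U \<omega> \<bullet> e))) \<partial>M) = ennreal (1/2) * A r + ennreal (1/2) * A (- r)"
    unfolding A_def by (simp add: nn_integral_add nn_integral_cmult)
  also have "\<dots> = (ennreal (1/2) + ennreal (1/2)) * A r"
    using \<open>A (- r) = A r\<close> by (simp only: distrib_right)
  also have "ennreal (1/2) + ennreal (1/2) = 1"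
    by (subst ennreal_plus[symmetric]) auto
  finally have cosh: "(\<integral>\<^sup>+\<omega>. ennreal (cosh (r * (U \<omega> \<bullet> e))) \<partial>M) = A r"
    by simp
  have "A r = (\<integral>\<^sup>+\<omega>. (\<Sum>k. ennreal (r^(2*k) / fact (2*k)) * ennreal ((U \<omega> \<bullet> e)^(2*k))) \<partial>M)"
    unfolding cosh[symmetric] by (simp only: ennreal_cosh_mult_series)
  also have "\<dots> = (\<Sum>k. ennreal (r^(2*k) / fact (2*k)) * proj_moment M U e k)"
    unfolding proj_moment_def by (subst nn_integral_suminf) (auto intro!: suminf_cong nn_integral_cmult)
  finally show ?thesis
    using radial[of z] by (simp add: r_def)
qed

lemma norm_moment_exp_series:
  fixes U :: "'a \<Rightarrow> real^'d"
  assumes "U \<in> borel_measurable M" "0 \<le> t"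
  shows "(\<Sum>k. ennreal (t^k / fact k) * norm_moment M U k)
    = (\<integral>\<^sup>+\<omega>. ennreal (exp (t * (norm (U \<omega>))\<^sup>2)) \<partial>M)"
proof -
  have "(\<integral>\<^sup>+\<omega>. 1 * ennreal (exp (t * (norm (U \<omega>))\<^sup>2)) \<partial>M)
      = (\<Sum>k. ennreal (t^k / fact k) * (\<integral>\<^sup>+\<omega>. 1 * ennreal (((norm (U \<omega>))\<^sup>2)^k) \<partial>M))"
    using assms by (intro nn_integral_exp_mult_series) auto
  then show ?thesis
    by (simp add: norm_moment_def power_mult)
qed

lemma norm_moment_exp_series_finite:
  fixes U :: "'a \<Rightarrow> real^'d"
  assumes "U \<in> borel_measurable M" "0 \<le> t" "t \<le> \<delta>"
    and "(\<integral>\<^sup>+\<omega>. ennreal (exp (\<delta> * (norm (U \<omega>))\<^sup>2)) \<partial>M) < \<top>"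
  shows "(\<Sum>k. ennreal (t^k / fact k) * norm_moment M U k) < \<top>"
proof -
  have "(\<integral>\<^sup>+\<omega>. ennreal (exp (t * (norm (U \<omega>))\<^sup>2)) \<partial>M) \<le> (\<integral>\<^sup>+\<omega>. ennreal (exp (\<delta> * (norm (U \<omega>))\<^sup>2)) \<partial>M)"
    using assms(3) by (intro nn_integral_mono ennreal_leI) (simp add: mult_right_mono)
  then show ?thesis
    using assms by (simp add: norm_moment_exp_series)
qed

lemma norm_moment_finite:
  fixes U :: "'a \<Rightarrow> real^'d"
  assumes "U \<in> borel_measurable M" "0 < \<delta>"
    and "(\<integral>\<^sup>+\<omega>. ennreal (exp (\<delta> * (norm (U \<omega>))\<^sup>2)) \<partial>M) < \<top>"
  shows "norm_moment M U k < \<top>"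
proof -
  have "(\<Sum>k. ennreal (\<delta>^k / fact k) * norm_moment M U k) < \<top>"
    using assms(2) by (intro norm_moment_exp_series_finite[OF assms(1) _ order_refl assms(3)]) simp
  then have "ennreal (\<delta>^k / fact k) * norm_moment M U k < \<top>"
    by (rule ennreal_suminf_lessD)
  then show ?thesis
    using assms(2) by (auto simp: ennreal_mult_less_top)
qed

lemma proj_moment_le_norm_moment:
  fixes U :: "'a \<Rightarrow> real^'d"
  assumes "norm e = 1"
  shows "proj_moment M U e k \<le> norm_moment M U k"
  unfolding proj_moment_def norm_moment_def
proof (intro nn_integral_mono ennreal_leI)
  fix \<omega>
  have "\<bar>U \<omega> \<bullet> e\<bar> \<le> norm (U \<omega>)"
    using Cauchy_Schwarz_ineq2[of "U \<omega>" e] assms by simp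
  then have "\<bar>U \<omega> \<bullet> e\<bar>^(2*k) \<le> (norm (U \<omega>))^(2*k)"
    by (rule power_mono) simp
  then show "(U \<omega> \<bullet> e)^(2*k) \<le> (norm (U \<omega>))^(2*k)"
    by (simp add: power_even_abs)
qed

lemma rot_invariant_moment_identity:
  fixes U :: "'a \<Rightarrow> real^'d"
  assumes "sigma_finite_measure M" and [measurable]: "U \<in> borel_measurable M"
    and rot: "rot_invariant_distr M U" and e: "norm e = 1"
    and norm1: "(\<integral>\<^sup>+w. ennreal (std_gauss_density (w::real^'d)) \<partial>lborel) = 1"
  shows "(\<Sum>k. ennreal ((s\<^sup>2/2)^k / fact k) * norm_moment M U k)
    = (\<Sum>k. ennreal (s^(2*k) / fact (2*k)) * proj_moment M U e k * ennreal (2^k * pochhammer (real CARD('d) / 2) k))"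
proof -
  interpret pair_sigma_finite M "lborel :: (real^'d) measure"
    using assms(1) by (simp add: pair_sigma_finite_def sigma_finite_lborel)
  define H where "H \<omega> w = ennreal (std_gauss_density w * exp (U \<omega> \<bullet> (s *\<^sub>R w)))" for \<omega> w
  have "case_prod H \<in> borel_measurable (M \<Otimes>\<^sub>M lborel)"
    unfolding H_def by measurable
  note Fubini = Fubini'[OF this]
  have "(\<integral>\<^sup>+w. H \<omega> w \<partial>lborel) = ennreal (exp ((s\<^sup>2/2) * (norm (U \<omega>))\<^sup>2))" for \<omega>
    using nn_integral_std_gauss_exp_inner[OF norm1, of "s *\<^sub>R U \<omega>"]
    by (simp add: H_def inner_commute power_mult_distrib)
  then have left: "(\<integral>\<^sup>+\<omega>. (\<integral>\<^sup>+w. H \<omega> w \<partial>lborel) \<partial>M)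
      = (\<Sum>k. ennreal ((s\<^sup>2/2)^k / fact k) * norm_moment M U k)"
    by (simp add: norm_moment_exp_series)
  have "(\<integral>\<^sup>+\<omega>. H \<omega> w \<partial>M) = (\<Sum>k. ennreal (s^(2*k) / fact (2*k)) * proj_moment M U e k
      * ennreal (std_gauss_density w * (norm w)^(2*k)))" for w
  proof -
    have split: "ennreal ((norm (s *\<^sub>R w))^(2*k) / fact (2*k))
        = ennreal (s^(2*k) / fact (2*k)) * ennreal ((norm w)^(2*k))" for k
      by (subst ennreal_mult[symmetric])
        (simp_all add: zero_le_even_power power_mult_distrib power_even_abs)
    have "(\<integral>\<^sup>+\<omega>. H \<omega> w \<partial>M)
        = ennreal (std_gauss_density w) * (\<integral>\<^sup>+\<omega>. ennreal (exp (U \<omega> \<bullet> (s *\<^sub>R w))) \<partial>M)"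
      unfolding H_def by (simp add: ennreal_mult nn_integral_cmult)
    also have "\<dots> = ennreal (std_gauss_density w)
        * (\<Sum>k. ennreal ((norm (s *\<^sub>R w))^(2*k) / fact (2*k)) * proj_moment M U e k)"
      by (simp only: rot_invariant_exp_inner_series[OF assms(2) rot e])
    also have "\<dots> = (\<Sum>k. ennreal (std_gauss_density w)
        * (ennreal ((norm (s *\<^sub>R w))^(2*k) / fact (2*k)) * proj_moment M U e k))"
      by (rule ennreal_suminf_cmult[symmetric])
    also have "\<dots> = (\<Sum>k. ennreal (s^(2*k) / fact (2*k)) * proj_moment M U e k
        * ennreal (std_gauss_density w * (norm w)^(2*k)))"
      unfolding split by (simp add: ennreal_mult mult_ac)
    finally show ?thesis .
  qed
  then have right: "(\<integral>\<^sup>+w. (\<integral>\<^sup>+\<omega>. H \<omega> w \<partial>M) \<partial>lborel)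
      = (\<Sum>k. ennreal (s^(2*k) / fact (2*k)) * proj_moment M U e k * ennreal (2^k * pochhammer (real CARD('d) / 2) k))"
    by (simp add: nn_integral_suminf nn_integral_cmult nn_integral_std_gauss_norm_pow[OF norm1])
  show ?thesis
    using left right Fubini by simp
qed

lemma proj_moment_eq_norm_moment:
  fixes U :: "'a \<Rightarrow> real^'d"
  assumes "sigma_finite_measure M" and [measurable]: "U \<in> borel_measurable M"
    and rot: "rot_invariant_distr M U" and e: "norm e = 1"
    and norm1: "(\<integral>\<^sup>+w. ennreal (std_gauss_density (w::real^'d)) \<partial>lborel) = 1"
    and \<delta>: "0 < \<delta>" and fin: "(\<integral>\<^sup>+\<omega>. ennreal (exp (\<delta> * (norm (U \<omega>))\<^sup>2)) \<partial>M) < \<top>"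
  shows "proj_moment M U e k
    = ennreal (fact (2*k) / (4^k * fact k * pochhammer (real CARD('d) / 2) k)) * norm_moment M U k"
proof -
  define p where "p k = pochhammer (real CARD('d) / 2) k" for k
  have p: "0 < p k" for k
    unfolding p_def by (rule pochhammer_pos) simp
  define E where "E k = enn2real (norm_moment M U k)" for k
  define P where "P k = enn2real (proj_moment M U e k)" for k
  have norm_fin: "norm_moment M U k < \<top>" for k
    by (rule norm_moment_finite[OF _ \<delta> fin]) simp
  have E: "norm_moment M U k = ennreal (E k)" "0 \<le> E k" for k
    using norm_fin[of k] by (simp_all add: E_def)
  have P: "proj_moment M U e k = ennreal (P k)" "0 \<le> P k" for k
    using le_less_trans[OF proj_moment_le_norm_moment[OF e] norm_fin] by (simp_all add: P_def)
  have "E k / (2^k * fact k) = P k * (2^k * p k) / fact (2*k)"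
  proof (rule ennreal_powser_coeffs_unique[where a = "\<lambda>k. E k / (2^k * fact k)"
        and b = "\<lambda>k. P k * (2^k * p k) / fact (2*k)", OF \<delta>])
    fix t :: real assume t: "0 < t" "t < \<delta>"
    have "(sqrt t)^(2*k) = t^k" for k
      using t by (simp add: power_mult)
    then have "ennreal (P k * (2^k * p k) / fact (2*k) * t^k)
        = ennreal ((sqrt t)^(2*k) / fact (2*k)) * proj_moment M U e k * ennreal (2^k * p k)" for k
      unfolding P(1) using t P(2) p[of k] by (simp add: ennreal_mult[symmetric] mult_ac)
    moreover have norm_terms: "ennreal (E k / (2^k * fact k) * t^k) = ennreal ((t/2)^k / fact k) * norm_moment M U k" for k
      unfolding E(1) using t E(2) by (simp add: ennreal_mult[symmetric] power_divide)
    ultimately show "(\<Sum>k. ennreal (E k / (2^k * fact k) * t^k)) = (\<Sum>k. ennreal (P k * (2^k * p k) / fact (2*k) * t^k))"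
      using rot_invariant_moment_identity[OF assms(1,2) rot e norm1, of "sqrt t"] t by (simp add: p_def)
    show "(\<Sum>k. ennreal (E k / (2^k * fact k) * t^k)) < \<top>"
      using norm_moment_exp_series_finite[OF assms(2), of "t/2" \<delta>] norm_terms fin t by simp
  qed (use E(2) P(2) less_imp_le[OF p] in simp_all)
  moreover have "(4::real)^k = 2^k * 2^k"
    by (simp flip: power_mult_distrib)
  ultimately have "P k = fact (2*k) / (4^k * fact k * p k) * E k"
    using p[of k] by (simp add: field_simps)
  moreover have "ennreal (fact (2*k) / (4^k * fact k * p k) * E k)
      = ennreal (fact (2*k) / (4^k * fact k * p k)) * ennreal (E k)"
    by (rule ennreal_mult) (use E(2) p[of k] in auto)
  ultimately show ?thesis
    unfolding P(1) E(1) p_def by simp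
qed

definition conformity_kernel :: "real \<Rightarrow> real \<Rightarrow> real \<Rightarrow> real" where
  "conformity_kernel D v r = (\<Sum>k. v^(2*k) * r^(2*k) / (2^(2*k) * fact k * Gamma (real k + D / 2)))"

lemma conformity_kernel_term:
  fixes D :: real
  assumes "0 < D"
  shows "Gamma (D / 2) * (v^(2*k) * r^(2*k) / (2^(2*k) * fact k * Gamma (real k + D / 2)))
    = v^(2*k) / (4^k * fact k * pochhammer (D / 2) k) * r^(2*k)"
proof -
  have "Gamma (real k + D / 2) = pochhammer (D / 2) k * Gamma (D / 2)"
    using assms by (intro Gamma_add_of_nat_eq_pochhammer) simp
  moreover have "(2::real)^(2*k) = 4^k"
    by (simp add: power_mult)
  moreover have "0 < Gamma (D / 2)"
    using assms by simp
  ultimately show ?thesis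
    by simp
qed

lemma conformity_kernel_summable:
  fixes D :: real
  assumes "0 < D"
  shows "summable (\<lambda>k. v^(2*k) * r^(2*k) / (2^(2*k) * fact k * Gamma (real k + D / 2)))"
proof -
  define X where "X = v\<^sup>2 * r\<^sup>2"
  define c where "c k = v^(2*k) * r^(2*k) / (2^(2*k) * fact k * Gamma (real k + D / 2))" for k
  have G: "0 < Gamma (D / 2)"
    using assms by simp
  have bound: "Gamma (D / 2) * c k \<le> inverse (fact k) * (X / (2 * D))^k" for k
  proof -
    have p: "(D / 2)^k \<le> pochhammer (D / 2) k" "0 < pochhammer (D / 2) k"
      using assms by (intro pochhammer_ge_power pochhammer_pos; simp)+
    have swap: "y^k / (fact k * a^k) = inverse (fact k) * (y / a)^k" for y a :: real
      by (simp add: power_divide divide_inverse inverse_mult_distrib power_mult_distrib power_inverse mult_ac)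
    have "v^(2*k) * r^(2*k) = X^k"
      by (simp add: X_def power_mult_distrib flip: power_mult)
    then have "Gamma (D / 2) * c k = (X / 4)^k / (fact k * pochhammer (D / 2) k)"
      unfolding c_def conformity_kernel_term[OF assms] by (simp add: power_divide)
    also have "\<dots> \<le> (X / 4)^k / (fact k * (D / 2)^k)"
      using p assms by (intro divide_left_mono mult_left_mono) (auto simp: X_def)
    also have "\<dots> = inverse (fact k) * ((X / 4) / (D / 2))^k"
      by (rule swap)
    also have "(X / 4) / (D / 2) = X / (2 * D)"
      by simp
    finally show ?thesis .
  qed
  have "norm (c k) \<le> inverse (fact k) * (X / (2 * D))^k * inverse (Gamma (D / 2))" for k
  proof -
    have "0 < Gamma (real k + D / 2)"
      using assms by (intro Gamma_real_pos) simp
    then have "norm (c k) = c k"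
      unfolding c_def by (simp add: zero_le_even_power)
    also have "c k = Gamma (D / 2) * c k * inverse (Gamma (D / 2))"
      using G by simp
    also have "\<dots> \<le> inverse (fact k) * (X / (2 * D))^k * inverse (Gamma (D / 2))"
      using bound[of k] G by (intro mult_right_mono) simp_all
    finally show ?thesis .
  qed
  moreover have "summable (\<lambda>k. inverse (fact k) * (X / (2 * D))^k * inverse (Gamma (D / 2)))"
    by (rule summable_mult2[OF summable_exp])
  ultimately show ?thesis
    unfolding c_def[symmetric] by (rule summable_comparison_test'[rotated])
qed

lemma conformity_kernel_sums:
  fixes D :: real
  assumes "0 < D"
  shows "(\<lambda>k. v^(2*k) / (4^k * fact k * pochhammer (D / 2) k) * r^(2*k)) sums (Gamma (D / 2) * conformity_kernel D v r)"
proof -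
  have "(\<lambda>k. Gamma (D / 2) * (v^(2*k) * r^(2*k) / (2^(2*k) * fact k * Gamma (real k + D / 2))))
      sums (Gamma (D / 2) * conformity_kernel D v r)"
    unfolding conformity_kernel_def using assms by (intro sums_mult summable_sums conformity_kernel_summable)
  then show ?thesis
    by (simp only: conformity_kernel_term[OF assms])
qed

lemma rot_invariant_exp_inner_eq_conformity_kernel:
  fixes U :: "'a \<Rightarrow> real^'d"
  assumes "sigma_finite_measure M" and [measurable]: "U \<in> borel_measurable M"
    and rot: "rot_invariant_distr M U"
    and norm1: "(\<integral>\<^sup>+w. ennreal (std_gauss_density (w::real^'d)) \<partial>lborel) = 1"
    and \<delta>: "0 < \<delta>" and fin: "(\<integral>\<^sup>+\<omega>. ennreal (exp (\<delta> * (norm (U \<omega>))\<^sup>2)) \<partial>M) < \<top>"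
  shows "(\<integral>\<^sup>+\<omega>. ennreal (exp (U \<omega> \<bullet> z)) \<partial>M) = (\<integral>\<^sup>+\<omega>. ennreal
    (Gamma (real CARD('d) / 2) * conformity_kernel (real CARD('d)) (norm z) (norm (U \<omega>))) \<partial>M)"
proof -
  obtain e :: "real^'d" where e: "norm e = 1"
    using vector_choose_size[of 1] by auto
  define p where "p k = pochhammer (real CARD('d) / 2) k" for k
  define c where "c k = (norm z)^(2*k) / (4^k * fact k * p k)" for k
  have c: "0 \<le> c k" for k
    using pochhammer_pos[of "real CARD('d) / 2" k] by (simp add: c_def p_def)
  have "(\<integral>\<^sup>+\<omega>. ennreal (exp (U \<omega> \<bullet> z)) \<partial>M)
      = (\<Sum>k. ennreal ((norm z)^(2*k) / fact (2*k)) * proj_moment M U e k)"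
    by (rule rot_invariant_exp_inner_series[OF _ rot e]) simp
  also have "\<dots> = (\<Sum>k. ennreal (c k) * norm_moment M U k)"
  proof (rule suminf_cong)
    fix k
    have "(norm z)^(2*k) / fact (2*k) * (fact (2*k) / (4^k * fact k * p k)) = c k"
      by (simp add: c_def)
    then have "ennreal ((norm z)^(2*k) / fact (2*k)) * ennreal (fact (2*k) / (4^k * fact k * p k)) = ennreal (c k)"
      using pochhammer_pos[of "real CARD('d) / 2" k] by (simp add: ennreal_mult[symmetric] p_def)
    then show "ennreal ((norm z)^(2*k) / fact (2*k)) * proj_moment M U e k = ennreal (c k) * norm_moment M U k"
      by (simp add: proj_moment_eq_norm_moment[OF assms(1,2) rot e norm1 \<delta> fin] p_def mult.assoc[symmetric])
  qed
  also have "\<dots> = (\<integral>\<^sup>+\<omega>. (\<Sum>k. ennreal (c k * (norm (U \<omega>))^(2*k))) \<partial>M)"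
    unfolding norm_moment_def using c
    by (subst nn_integral_suminf) (auto simp: nn_integral_cmult ennreal_mult intro!: suminf_cong)
  also have "\<dots> = (\<integral>\<^sup>+\<omega>. ennreal
      (Gamma (real CARD('d) / 2) * conformity_kernel (real CARD('d)) (norm z) (norm (U \<omega>))) \<partial>M)"
    using conformity_kernel_sums[of "real CARD('d)" "norm z"] c
    by (intro nn_integral_cong suminf_ennreal_eq)
      (auto simp: c_def p_def intro!: divide_nonneg_nonneg mult_nonneg_nonneg pochhammer_nonneg)
  finally show ?thesis .
qed

subsection \<open>Moments of the positive random features\<close>

lemma nn_integral_exp_add_finite:
  fixes f g :: "'a \<Rightarrow> real"
  assumes [measurable]: "f \<in> borel_measurable M" "g \<in> borel_measurable M"
    and "(\<integral>\<^sup>+x. ennreal (exp (2 * f x)) \<partial>M) < \<top>" "(\<integral>\<^sup>+x. ennreal (exp (2 * g x)) \<partial>M) < \<top>"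
  shows "(\<integral>\<^sup>+x. ennreal (exp (f x + g x)) \<partial>M) < \<top>"
proof -
  have "exp (f x + g x) \<le> exp (2 * f x) + exp (2 * g x)" for x
    by (cases "f x \<le> g x") (simp_all add: add_increasing add_increasing2)
  then have "(\<integral>\<^sup>+x. ennreal (exp (f x + g x)) \<partial>M)
      \<le> (\<integral>\<^sup>+x. ennreal (exp (2 * f x)) + ennreal (exp (2 * g x)) \<partial>M)"
    by (intro nn_integral_mono) (simp flip: ennreal_plus)
  also have "\<dots> < \<top>"
    using assms(3,4) by (simp add: nn_integral_add)
  finally show ?thesis .
qed

lemma distributed_std_gauss_nn_integral:
  fixes W :: "'a \<Rightarrow> real^'d"
  assumes "distributed M lborel W (\<lambda>z. ennreal (std_gauss_density z))"
    and "h \<in> borel_measurable borel" "\<And>w. 0 \<le> h w"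
  shows "(\<integral>\<^sup>+\<omega>. ennreal (h (W \<omega>)) \<partial>M) = (\<integral>\<^sup>+w. ennreal (std_gauss_density w * h w) \<partial>lborel)"
  using distributed_nn_integral[OF assms(1), of "\<lambda>w. ennreal (h w)"] assms(2,3)
  by (simp add: ennreal_mult)

lemma distributed_std_gauss_normalized:
  fixes W :: "'a \<Rightarrow> real^'d"
  assumes "prob_space M" "distributed M lborel W (\<lambda>z. ennreal (std_gauss_density z))"
  shows "(\<integral>\<^sup>+w. ennreal (std_gauss_density (w::real^'d)) \<partial>lborel) = 1"
  using distributed_std_gauss_nn_integral[OF assms(2), of "\<lambda>_. 1"] prob_space.emeasure_space_1[OF assms(1)]
  by simp

lemma distributed_std_gauss_exp_inner:
  fixes W :: "'a \<Rightarrow> real^'d"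
  assumes "prob_space M" "distributed M lborel W (\<lambda>z. ennreal (std_gauss_density z))"
  shows "(\<integral>\<^sup>+\<omega>. ennreal (exp (W \<omega> \<bullet> z)) \<partial>M) = ennreal (exp ((norm z)\<^sup>2 / 2))"
  using distributed_std_gauss_nn_integral[OF assms(2), of "\<lambda>w. exp (w \<bullet> z)"]
    nn_integral_std_gauss_exp_inner[OF distributed_std_gauss_normalized[OF assms]]
  by simp

lemma distributed_std_gauss_has_integral_exp_inner:
  fixes W :: "'a \<Rightarrow> real^'d"
  assumes "prob_space M" "distributed M lborel W (\<lambda>z. ennreal (std_gauss_density z))"
  shows "has_bochner_integral M (\<lambda>\<omega>. exp (W \<omega> \<bullet> z)) (exp ((norm z)\<^sup>2 / 2))"
  using distributed_measurable[OF assms(2)] distributed_std_gauss_exp_inner[OF assms]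
  by (intro has_bochner_integral_nn_integral) auto

lemma distributed_std_gauss_has_integral_exp_inner_sq:
  fixes W :: "'a \<Rightarrow> real^'d"
  assumes "prob_space M" "distributed M lborel W (\<lambda>z. ennreal (std_gauss_density z))"
  shows "has_bochner_integral M (\<lambda>\<omega>. (exp (W \<omega> \<bullet> z))\<^sup>2) (exp (2 * (norm z)\<^sup>2))"
proof -
  have "(exp (W \<omega> \<bullet> z))\<^sup>2 = exp (W \<omega> \<bullet> (2 *\<^sub>R z))" for \<omega>
    by (simp add: power2_eq_square flip: exp_add)
  moreover have "exp ((norm (2 *\<^sub>R z))\<^sup>2 / 2) = exp (2 * (norm z)\<^sup>2)"
    by (simp add: power_mult_distrib)
  ultimately show ?thesis
    using distributed_std_gauss_has_integral_exp_inner[OF assms, of "2 *\<^sub>R z"] by simp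
qed

lemma distributed_std_gauss_exp_norm_sq_finite:
  fixes W :: "'a \<Rightarrow> real^'d"
  assumes "prob_space M" "distributed M lborel W (\<lambda>z. ennreal (std_gauss_density z))"
  shows "(\<integral>\<^sup>+\<omega>. ennreal (exp ((norm (W \<omega>))\<^sup>2 / 4)) \<partial>M) < \<top>"
  using distributed_std_gauss_nn_integral[OF assms(2), of "\<lambda>w. exp ((norm w)\<^sup>2 / 4)"]
    nn_integral_std_gauss_exp_norm_sq[OF distributed_std_gauss_normalized[OF assms], of "1/2"]
  by simp

lemma conformity_kernel_nonneg:
  fixes D :: real
  assumes "0 < D"
  shows "0 \<le> conformity_kernel D v r"
proof -
  have "0 < Gamma (real k + D / 2)" for k
    using assms by (intro Gamma_real_pos add_nonneg_pos) simp_all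
  then show ?thesis
    unfolding conformity_kernel_def using assms
    by (intro suminf_nonneg conformity_kernel_summable divide_nonneg_pos mult_pos_pos) simp_all
qed

lemma sum_std_gauss_exp_norm_sq_finite:
  fixes W\<^sub>1 W\<^sub>2 :: "'a \<Rightarrow> real^'d"
  assumes "prob_space M"
    and "distributed M lborel W\<^sub>1 (\<lambda>z. ennreal (std_gauss_density z))"
    and "distributed M lborel W\<^sub>2 (\<lambda>z. ennreal (std_gauss_density z))"
  shows "(\<integral>\<^sup>+\<omega>. ennreal (exp (1/16 * (norm (W\<^sub>1 \<omega> + W\<^sub>2 \<omega>))\<^sup>2)) \<partial>M) < \<top>"
proof -
  have [measurable]: "W\<^sub>1 \<in> borel_measurable M" "W\<^sub>2 \<in> borel_measurable M"
    using assms(2,3) by (auto dest: distributed_measurable)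
  have "exp (1/16 * (norm (W\<^sub>1 \<omega> + W\<^sub>2 \<omega>))\<^sup>2) \<le> exp ((norm (W\<^sub>1 \<omega>))\<^sup>2 / 8 + (norm (W\<^sub>2 \<omega>))\<^sup>2 / 8)" for \<omega>
  proof -
    have "(norm (W\<^sub>1 \<omega> + W\<^sub>2 \<omega>))\<^sup>2 \<le> (norm (W\<^sub>1 \<omega>) + norm (W\<^sub>2 \<omega>))\<^sup>2"
      by (simp add: power_mono norm_triangle_ineq)
    also have "\<dots> \<le> 2 * (norm (W\<^sub>1 \<omega>))\<^sup>2 + 2 * (norm (W\<^sub>2 \<omega>))\<^sup>2"
      using sum_squares_ge_zero[of "norm (W\<^sub>1 \<omega>) - norm (W\<^sub>2 \<omega>)" 0]
      by (simp add: power2_eq_square algebra_simps)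
    finally show ?thesis
      by simp
  qed
  then have "(\<integral>\<^sup>+\<omega>. ennreal (exp (1/16 * (norm (W\<^sub>1 \<omega> + W\<^sub>2 \<omega>))\<^sup>2)) \<partial>M)
      \<le> (\<integral>\<^sup>+\<omega>. ennreal (exp ((norm (W\<^sub>1 \<omega>))\<^sup>2 / 8 + (norm (W\<^sub>2 \<omega>))\<^sup>2 / 8)) \<partial>M)"
    by (intro nn_integral_mono ennreal_leI)
  also have "\<dots> < \<top>"
    using distributed_std_gauss_exp_norm_sq_finite[OF assms(1,2)] distributed_std_gauss_exp_norm_sq_finite[OF assms(1,3)]
    by (intro nn_integral_exp_add_finite) simp_all
  finally show ?thesis .
qed

lemma rot_invariant_sum_exp_inner:
  fixes W\<^sub>1 W\<^sub>2 :: "'a \<Rightarrow> real^'d"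
  assumes P: "prob_space M"
    and gauss1: "distributed M lborel W\<^sub>1 (\<lambda>z. ennreal (std_gauss_density z))"
    and gauss2: "distributed M lborel W\<^sub>2 (\<lambda>z. ennreal (std_gauss_density z))"
    and rot: "rot_invariant_distr M (\<lambda>\<omega>. W\<^sub>1 \<omega> + W\<^sub>2 \<omega>)"
  shows "has_bochner_integral M (\<lambda>\<omega>. exp (W\<^sub>1 \<omega> \<bullet> z) * exp (W\<^sub>2 \<omega> \<bullet> z)) (Gamma (real CARD('d) / 2)
    * integral\<^sup>L M (\<lambda>\<omega>. conformity_kernel (real CARD('d)) (norm z) (norm (W\<^sub>1 \<omega> + W\<^sub>2 \<omega>))))"
proof -
  have [measurable]: "W\<^sub>1 \<in> borel_measurable M" "W\<^sub>2 \<in> borel_measurable M"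
    using gauss1 gauss2 by (auto dest: distributed_measurable)
  define F where "F \<omega> = Gamma (real CARD('d) / 2) * conformity_kernel (real CARD('d)) (norm z) (norm (W\<^sub>1 \<omega> + W\<^sub>2 \<omega>))"
    for \<omega>
  have F_measurable: "F \<in> borel_measurable M"
    unfolding F_def conformity_kernel_def by measurable
  have F_nonneg: "0 \<le> F \<omega>" for \<omega>
    unfolding F_def by (simp add: conformity_kernel_nonneg)
  have "(\<integral>\<^sup>+\<omega>. ennreal (exp (W\<^sub>1 \<omega> \<bullet> z + W\<^sub>2 \<omega> \<bullet> z)) \<partial>M) < \<top>"
    using distributed_std_gauss_exp_inner[OF P gauss1, of "2 *\<^sub>R z"] distributed_std_gauss_exp_inner[OF P gauss2, of "2 *\<^sub>R z"]
    by (intro nn_integral_exp_add_finite) simp_all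
  then obtain r where r: "(\<integral>\<^sup>+\<omega>. ennreal (exp ((W\<^sub>1 \<omega> + W\<^sub>2 \<omega>) \<bullet> z)) \<partial>M) = ennreal r" "0 \<le> r"
    unfolding inner_add_left by (cases "\<integral>\<^sup>+\<omega>. ennreal (exp (W\<^sub>1 \<omega> \<bullet> z + W\<^sub>2 \<omega> \<bullet> z)) \<partial>M" rule: ennreal_cases) auto
  moreover have "(\<integral>\<^sup>+\<omega>. ennreal (exp ((W\<^sub>1 \<omega> + W\<^sub>2 \<omega>) \<bullet> z)) \<partial>M) = (\<integral>\<^sup>+\<omega>. ennreal (F \<omega>) \<partial>M)"
    unfolding F_def
    using rot_invariant_exp_inner_eq_conformity_kernel[OF prob_space_imp_sigma_finite[OF P] _ rot
        distributed_std_gauss_normalized[OF P gauss1] _ sum_std_gauss_exp_norm_sq_finite[OF P gauss1 gauss2]]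
    by simp
  ultimately have "has_bochner_integral M F r" "has_bochner_integral M (\<lambda>\<omega>. exp ((W\<^sub>1 \<omega> + W\<^sub>2 \<omega>) \<bullet> z)) r"
    using F_measurable F_nonneg by (auto intro!: has_bochner_integral_nn_integral)
  then show ?thesis
    unfolding F_def by (simp add: has_bochner_integral_iff exp_add[symmetric] inner_add_left)
qed

subsection \<open>The mean squared error\<close>

lemma prf_estimator_eq_sum_exp:
  assumes "0 < m"
  shows "prf_estimator m w x y
    = exp (- (norm x)\<^sup>2 - (norm y)\<^sup>2) / real m * (\<Sum>k=1..m. exp (w k \<bullet> (x + y)))"
proof -
  have "sqrt (real m) * sqrt (real m) = real m"
    using assms by simp
  then have "prf_feature m w x k * prf_feature m w y k
      = exp (- (norm x)\<^sup>2 - (norm y)\<^sup>2) / real m * exp (w k \<bullet> (x + y))" for k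
    unfolding prf_feature_def by (simp add: inner_add_right exp_add exp_diff exp_minus field_simps)
  then show ?thesis
    unfolding prf_estimator_def by (simp add: sum_distrib_left)
qed

lemma gauss_kernel_eq_exp_norm_add:
  "gauss_kernel x y = exp (- (norm x)\<^sup>2 - (norm y)\<^sup>2) * exp ((norm (x + y))\<^sup>2 / 2)"
proof -
  have "(norm (x - y))\<^sup>2 = 2 * (norm x)\<^sup>2 + 2 * (norm y)\<^sup>2 - (norm (x + y))\<^sup>2"
    by (simp add: power2_norm_eq_inner inner_diff inner_add inner_commute algebra_simps)
  then show ?thesis
    unfolding gauss_kernel_def by (simp add: exp_add[symmetric] field_simps)
qed

lemma has_bochner_integral_sq_scaled_sum_minus_const:
  fixes e :: "nat \<Rightarrow> 'a \<Rightarrow> real"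
  assumes "prob_space M" "finite I"
    and "\<And>k. k \<in> I \<Longrightarrow> has_bochner_integral M (e k) (a k)"
    and "\<And>k. k \<in> I \<Longrightarrow> has_bochner_integral M (\<lambda>\<omega>. (e k \<omega>)\<^sup>2) (b k)"
    and "\<And>k l. k \<in> I \<Longrightarrow> l \<in> I \<Longrightarrow> k \<noteq> l \<Longrightarrow> has_bochner_integral M (\<lambda>\<omega>. e k \<omega> * e l \<omega>) (c k l)"
  shows "has_bochner_integral M (\<lambda>\<omega>. (C * (\<Sum>k\<in>I. e k \<omega>) - K)\<^sup>2)
    (C\<^sup>2 * ((\<Sum>k\<in>I. b k) + (\<Sum>k\<in>I. \<Sum>l\<in>I - {k}. c k l)) - 2 * C * K * (\<Sum>k\<in>I. a k) + K\<^sup>2)"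
proof -
  interpret prob_space M
    by (rule assms(1))
  have square: "(\<Sum>k\<in>I. e k \<omega>)\<^sup>2 = (\<Sum>k\<in>I. (e k \<omega>)\<^sup>2) + (\<Sum>k\<in>I. \<Sum>l\<in>I - {k}. e k \<omega> * e l \<omega>)" for \<omega>
  proof -
    have "(\<Sum>k\<in>I. e k \<omega>)\<^sup>2 = (\<Sum>k\<in>I. (e k \<omega>)\<^sup>2 + (\<Sum>l\<in>I - {k}. e k \<omega> * e l \<omega>))"
      unfolding power2_eq_square sum_product using assms(2)
      by (intro sum.cong refl) (simp add: sum.remove)
    then show ?thesis
      by (simp add: sum.distrib)
  qed
  have "(C * (\<Sum>k\<in>I. e k \<omega>) - K)\<^sup>2 = C\<^sup>2 * ((\<Sum>k\<in>I. (e k \<omega>)\<^sup>2) + (\<Sum>k\<in>I. \<Sum>l\<in>I - {k}. e k \<omega> * e l \<omega>))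
      - 2 * C * K * (\<Sum>k\<in>I. e k \<omega>) + K\<^sup>2" for \<omega>
    unfolding square[symmetric] by (simp add: power2_eq_square algebra_simps)
  moreover have "has_bochner_integral M (\<lambda>_. K\<^sup>2) (K\<^sup>2)"
    by (simp add: has_bochner_integral_iff prob_space)
  ultimately show ?thesis
    using assms(3-5)
    by (simp only:) (intro has_bochner_integral_add has_bochner_integral_diff has_bochner_integral_mult_right
        has_bochner_integral_sum; simp)
qed

lemma integral_sq_scaled_mean_minus_const:
  fixes e :: "nat \<Rightarrow> 'a \<Rightarrow> real"
  assumes "prob_space M" "2 \<le> m"
    and "\<And>k. k \<in> {1..m} \<Longrightarrow> has_bochner_integral M (e k) q"
    and "\<And>k. k \<in> {1..m} \<Longrightarrow> has_bochner_integral M (\<lambda>\<omega>. (e k \<omega>)\<^sup>2) b"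
    and "\<And>k l. k \<in> {1..m} \<Longrightarrow> l \<in> {1..m} \<Longrightarrow> k \<noteq> l \<Longrightarrow> has_bochner_integral M (\<lambda>\<omega>. e k \<omega> * e l \<omega>) (c k l)"
  shows "integral\<^sup>L M (\<lambda>\<omega>. (C / m * (\<Sum>k=1..m. e k \<omega>) - C * q)\<^sup>2)
    = C\<^sup>2 / m * ((b - q\<^sup>2) + (real m - 1)
        * ((\<Sum>k=1..m. \<Sum>l\<in>{1..m} - {k}. c k l) / (real m * (real m - 1)) - q\<^sup>2))"
proof -
  have m: "0 < real m" "0 < real m - 1"
    using assms(2) by simp_all
  have "has_bochner_integral M (\<lambda>\<omega>. (C / m * (\<Sum>k=1..m. e k \<omega>) - C * q)\<^sup>2)
      ((C / m)\<^sup>2 * ((\<Sum>k=1..m. b) + (\<Sum>k=1..m. \<Sum>l\<in>{1..m} - {k}. c k l))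
        - 2 * (C / m) * (C * q) * (\<Sum>k=1..m. q) + (C * q)\<^sup>2)"
    by (rule has_bochner_integral_sq_scaled_sum_minus_const[OF assms(1) finite_atLeastAtMost assms(3-5)])
  then have "integral\<^sup>L M (\<lambda>\<omega>. (C / m * (\<Sum>k=1..m. e k \<omega>) - C * q)\<^sup>2)
      = (C / m)\<^sup>2 * (m * b + (\<Sum>k=1..m. \<Sum>l\<in>{1..m} - {k}. c k l)) - 2 * (C / m) * (C * q) * (m * q) + (C * q)\<^sup>2"
    by (simp add: has_bochner_integral_iff)
  also have "\<dots> = C\<^sup>2 / m * ((b - q\<^sup>2) + (real m - 1)
      * ((\<Sum>k=1..m. \<Sum>l\<in>{1..m} - {k}. c k l) / (real m * (real m - 1)) - q\<^sup>2))"
    using m by (simp add: field_simps power2_eq_square)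
  finally show ?thesis .
qed

theorem theorem3p2:
  fixes M :: "'a measure" and m :: nat and W :: "nat \<Rightarrow> 'a \<Rightarrow> real^'d"
    and x y :: "real^'d"
  assumes "prob_space M"
    and "m \<ge> 2"
    and gauss: "\<And>i. i \<in> {1..m} \<Longrightarrow>
                  distributed M lborel (W i) (\<lambda>z. ennreal (std_gauss_density z))"
    and rot: "\<And>i j. i \<in> {1..m} \<Longrightarrow> j \<in> {1..m} \<Longrightarrow> i \<noteq> j \<Longrightarrow>
                  rot_invariant_distr M (\<lambda>\<omega>. W i \<omega> + W j \<omega>)"
  shows "integral\<^sup>L M (\<lambda>\<omega>. (prf_estimator m (\<lambda>k. W k \<omega>) x y - gauss_kernel x y)\<^sup>2)
         = exp (- 2 * (norm x)\<^sup>2 - 2 * (norm y)\<^sup>2) / real m *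
           ((exp (2 * (norm (x + y))\<^sup>2) - exp ((norm (x + y))\<^sup>2))
            + (real m - 1) * (rf_conformity M m W x y - exp ((norm (x + y))\<^sup>2)))"
proof -
  define C where "C = exp (- (norm x)\<^sup>2 - (norm y)\<^sup>2)"
  define q where "q = exp ((norm (x + y))\<^sup>2 / 2)"
  define c where "c k l = Gamma (real CARD('d) / 2)
    * integral\<^sup>L M (\<lambda>\<omega>. conformity_kernel (real CARD('d)) (norm (x + y)) (norm (W k \<omega> + W l \<omega>)))" for k l
  have "integral\<^sup>L M (\<lambda>\<omega>. (prf_estimator m (\<lambda>k. W k \<omega>) x y - gauss_kernel x y)\<^sup>2)
      = integral\<^sup>L M (\<lambda>\<omega>. (C / m * (\<Sum>k=1..m. exp (W k \<omega> \<bullet> (x + y))) - C * q)\<^sup>2)"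
    using assms(2) by (simp add: prf_estimator_eq_sum_exp gauss_kernel_eq_exp_norm_add C_def q_def)
  also have "\<dots> = C\<^sup>2 / m * ((exp (2 * (norm (x + y))\<^sup>2) - q\<^sup>2) + (real m - 1)
      * ((\<Sum>k=1..m. \<Sum>l\<in>{1..m} - {k}. c k l) / (real m * (real m - 1)) - q\<^sup>2))"
    using assms(1,2) gauss rot unfolding q_def c_def
    by (intro integral_sq_scaled_mean_minus_const distributed_std_gauss_has_integral_exp_inner
        distributed_std_gauss_has_integral_exp_inner_sq rot_invariant_sum_exp_inner) auto
  also have "(\<Sum>k=1..m. \<Sum>l\<in>{1..m} - {k}. c k l) / (real m * (real m - 1)) = rf_conformity M m W x y"
    unfolding rf_conformity_def conformity_kernel_def c_def by (simp add: sum_distrib_left sum_divide_distrib)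
  also have "q\<^sup>2 = exp ((norm (x + y))\<^sup>2)"
    by (simp add: q_def power2_eq_square flip: exp_add)
  also have "C\<^sup>2 = exp (- 2 * (norm x)\<^sup>2 - 2 * (norm y)\<^sup>2)"
    by (simp add: C_def power2_eq_square flip: exp_add)
  finally show ?thesis .
qed

end
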